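(* Assume no two of $\bm u_1,\dots,\bm u_m$ are parallel (i.e. the linear arrangement $\{\langle\bm u_i,\bm x\rangle=0\}$ has no repeated hyperplane). Then for $\bm a,\bm b\in\mathbb{R}^m$, the parallel translations $\mathcal{A}_{\bm a}$ and $\mathcal{A}_{\bm b}$ are normally equivalent if and only if $\operatorname{sign}(\mathcal{A}_{\bm a})=\operatorname{sign}(\mathcal{A}_{\bm b})$.
   Context: Fix nonzero $\bm u_1,\dots,\bm u_m\in\mathbb{R}^n$. For $\bm a\in\mathbb{R}^m$, $\mathcal{A}_{\bm a}$ is the indexed arrangement of hyperplanes $\langle\bm u_i,\bm x\rangle=a_i$, $i=1,\dots,m$. The sign vector of $\bm x$ is $(\operatorname{sign}(\langle\bm u_i,\bm x\rangle-a_i))_{i}$, and $\operatorname{sign}(\mathcal{A}_{\bm a})$ is the set of all such sign vectors. Faces: closures of the nonempty sets of points with a common sign vector; $\mathcal{F}(\mathcal{A})$ ordered by inclusion. For a nonempty convex polyhedron $P$: $h_P(\bm u)=\sup_{\bm x\in P}\langle\bm u,\bm x\rangle$, $N_P(\bm x)=\{\bm u:\langle\bm u,\bm x\rangle=h_P(\bm u)\}$, $N_P(G)=N_P(\bm x)$ for $\bm x\in\operatorname{relint}(G)$, $\mathcal{N}(P)$ the set of all $N_P(G)$; $P,Q$ normally equivalent iff $\mathcal{N}(P)=\mathcal{N}(Q)$. Arrangements $\mathcal{A},\mathcal{A}'$ in $\mathbb{R}^n$ are normally equivalent if there is an order-preserving bijection $\Psi:\mathcal{F}(\mathcal{A})\to\mathcal{F}(\mathcal{A}')$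 with $F,\Psi(F)$ normally equivalent for all faces $F$. *)

theory Defs
  imports "HOL-Analysis.Analysis" "HOL-Library.Extended_Real"
begin

(* Arrangement A_a of hyperplanes <u i, x> = a i, i < m, in the euclidean space 'a.
   Sign vectors are functions nat => real, set to 0 outside the index range {..<m}. *)

definition sign_vec :: "nat \<Rightarrow> (nat \<Rightarrow> 'a::euclidean_space) \<Rightarrow> (nat \<Rightarrow> real) \<Rightarrow> 'a \<Rightarrow> (nat \<Rightarrow> real)" where
  "sign_vec m u a x = (\<lambda>i. if i < m then sgn (inner (u i) x - a i) else 0)"

definition arr_signs :: "nat \<Rightarrow> (nat \<Rightarrow> 'a::euclidean_space) \<Rightarrow> (nat \<Rightarrow> real) \<Rightarrow> (nat \<Rightarrow> real) set" where
  "arr_signs m u a = sign_vec m u a ` UNIV"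

definition arr_faces :: "nat \<Rightarrow> (nat \<Rightarrow> 'a::euclidean_space) \<Rightarrow> (nat \<Rightarrow> real) \<Rightarrow> 'a set set" where
  "arr_faces m u a = {closure {x. sign_vec m u a x = s} | s. s \<in> arr_signs m u a}"

definition support_fun :: "'a::euclidean_space set \<Rightarrow> 'a \<Rightarrow> ereal" where
  "support_fun P v = (SUP x\<in>P. ereal (inner v x))"

definition normal_cone_at :: "'a::euclidean_space set \<Rightarrow> 'a \<Rightarrow> 'a set" where
  "normal_cone_at P x = {v. ereal (inner v x) = support_fun P v}"

(* normal fan: the set of all N_P(G) = N_P(x), x in the relative interior of a face G *)
definition normal_fan :: "'a::euclidean_space set \<Rightarrow> 'a set set" where
  "normal_fan P = {normal_cone_at P x | G x. G face_of P \<and> x \<in> rel_interior G}"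

definition normally_equiv :: "'a::euclidean_space set \<Rightarrow> 'a set \<Rightarrow> bool" where
  "normally_equiv P Q \<longleftrightarrow> normal_fan P = normal_fan Q"

definition arr_normally_equiv ::
  "'a::euclidean_space set set \<Rightarrow> 'a set set \<Rightarrow> bool" where
  "arr_normally_equiv F F' \<longleftrightarrow>
     (\<exists>\<Psi>. bij_betw \<Psi> F F'
        \<and> (\<forall>G\<in>F. \<forall>H\<in>F. G \<subseteq> H \<longleftrightarrow> \<Psi> G \<subseteq> \<Psi> H)
        \<and> (\<forall>G\<in>F. normally_equiv G (\<Psi> G)))"

end

theory Submission
  imports Defs
begin

text \<open>
  The faces of \<open>\<A>\<^sub>a\<close> are the closed cells \<open>{x. sign_le (sign_vec m u a x) s}\<close>, ordered
  like their sign vectors, and the normal cone of the closed cell of \<open>s\<close> at a point of sign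
  \<open>t\<close> is the polar of the directions feasible for \<open>(s, t)\<close>. Hence the face poset and all
  normal fans are determined by \<open>sign(\<A>\<^sub>a)\<close>, which gives one direction.

  Conversely, let \<open>\<Psi>\<close> be a normal equivalence. At a point lying on the single hyperplane
  \<open>H\<^sub>j\<close> the normal cone is the ray or line spanned by \<open>u\<^sub>j\<close>; as no two \<open>u\<^sub>i\<close> are parallel it
  identifies \<open>j\<close> and the side of \<open>H\<^sub>j\<close>. So \<open>\<Psi>\<close> maps facets on \<open>H\<^sub>i\<close> to facets on \<open>H\<^sub>i\<close>,
  and a region with a facet on \<open>H\<^sub>j\<close> to a region on the same side of \<open>H\<^sub>j\<close>. Walking from an
  arbitrary region to a generic point of \<open>H\<^sub>j\<close>, crossing the other hyperplanes one at a time
  through facets, shows that \<open>\<Psi>\<close> fixes the sign vector of every region. Every sign vector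
  is determined by the regions above it, so \<open>\<Psi>\<close> preserves all sign vectors.
\<close>

section \<open>Sign vectors and closed cells\<close>

definition sign_le :: "(nat \<Rightarrow> real) \<Rightarrow> (nat \<Rightarrow> real) \<Rightarrow> bool" where
  "sign_le t s \<longleftrightarrow> (\<forall>k. t k = 0 \<or> t k = s k)"

definition cell :: "nat \<Rightarrow> (nat \<Rightarrow> 'a::euclidean_space) \<Rightarrow> (nat \<Rightarrow> real) \<Rightarrow> (nat \<Rightarrow> real) \<Rightarrow> 'a set" where
  "cell m u a s = {x. sign_vec m u a x = s}"

lemma sign_le_refl [simp]: "sign_le s s"
  by (simp add: sign_le_def)

lemma sign_le_trans: "sign_le t s \<Longrightarrow> sign_le s r \<Longrightarrow> sign_le t r"
  unfolding sign_le_def by metis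

lemma sign_le_antisym: "sign_le t s \<Longrightarrow> sign_le s t \<Longrightarrow> t = s"
  unfolding sign_le_def by (metis ext)

lemma sgn_eq_iff_mult_pos: "(\<sigma>::real) = 1 \<or> \<sigma> = -1 \<Longrightarrow> sgn x = \<sigma> \<longleftrightarrow> 0 < \<sigma> * x"
  by (auto simp: sgn_if mult_less_0_iff zero_less_mult_iff)

lemma sgn_times_self_pos: "(r::real) \<noteq> 0 \<Longrightarrow> 0 < sgn r * r"
  by (simp add: sgn_if)

lemma inner_combination_diff:
  "inner w ((1 - e) *\<^sub>R p + e *\<^sub>R q) - c = (1 - e) * (inner w p - c) + e * (inner w q - c)"
  by (simp add: inner_add_right algebra_simps)

lemma sign_vec_below: "k < m \<Longrightarrow> sign_vec m u a x k = sgn (inner (u k) x - a k)"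
  by (simp add: sign_vec_def)

lemma sign_vec_beyond: "m \<le> k \<Longrightarrow> sign_vec m u a x k = 0"
  by (simp add: sign_vec_def)

lemma sign_vec_in_arr_signs [simp]: "sign_vec m u a x \<in> arr_signs m u a"
  by (simp add: arr_signs_def)

lemma arr_signs_cases: "s \<in> arr_signs m u a \<Longrightarrow> s k = 0 \<or> s k = 1 \<or> s k = -1"
  by (auto simp: arr_signs_def sign_vec_def sgn_if split: if_splits)

lemma arr_signs_beyond: "s \<in> arr_signs m u a \<Longrightarrow> m \<le> k \<Longrightarrow> s k = 0"
  by (auto simp: arr_signs_def sign_vec_def)

lemma arr_signs_nonzero: "s \<in> arr_signs m u a \<Longrightarrow> s k \<noteq> 0 \<Longrightarrow> s k = 1 \<or> s k = -1"
  by (metis arr_signs_cases)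

lemma sign_vec_eqI:
  assumes s: "s \<in> arr_signs m u a"
    and "\<And>k. k < m \<Longrightarrow> s k = 0 \<Longrightarrow> inner (u k) x - a k = 0"
    and "\<And>k. k < m \<Longrightarrow> s k \<noteq> 0 \<Longrightarrow> 0 < s k * (inner (u k) x - a k)"
  shows "sign_vec m u a x = s"
proof
  fix k show "sign_vec m u a x k = s k"
  proof (cases "k < m")
    case True
    then show ?thesis
      using assms(2,3) sgn_eq_iff_mult_pos[OF arr_signs_nonzero[OF s]]
      by (cases "s k = 0") (simp_all add: sign_vec_below)
  qed (simp add: arr_signs_beyond[OF s] sign_vec_beyond)
qed

lemma sign_le_sign_vec_iff:
  assumes s: "s \<in> arr_signs m u a"
  shows "sign_le (sign_vec m u a x) s \<longleftrightarrow>
    (\<forall>k<m. (s k = 0 \<longrightarrow> inner (u k) x - a k = 0) \<and> 0 \<le> s k * (inner (u k) x - a k))"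
proof -
  have "(sign_vec m u a x k = 0 \<or> sign_vec m u a x k = s k) \<longleftrightarrow>
     ((s k = 0 \<longrightarrow> inner (u k) x - a k = 0) \<and> 0 \<le> s k * (inner (u k) x - a k))" if "k < m" for k
    using arr_signs_cases[OF s, of k] that
    by (auto simp: sign_vec_below sgn_if not_less zero_le_mult_iff mult_le_0_iff)
  then show ?thesis
    unfolding sign_le_def by (metis not_le sign_vec_beyond)
qed

lemma sign_le_set_eq_Inter:
  assumes s: "s \<in> arr_signs m u a"
  shows "{x. sign_le (sign_vec m u a x) s} =
    (\<Inter>k<m. {x. s k * a k \<le> inner (s k *\<^sub>R u k) x} \<inter> {x. s k = 0 \<longrightarrow> inner (u k) x = a k})"
  unfolding sign_le_sign_vec_iff[OF s] by (auto simp: algebra_simps)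

lemma closed_sign_le_set:
  assumes "s \<in> arr_signs m u a"
  shows "closed {x. sign_le (sign_vec m u a x) s}"
proof -
  have "closed {x. s k = 0 \<longrightarrow> inner (u k) x = a k}" for k
    by (cases "s k = 0") (auto intro!: closed_hyperplane)
  then show ?thesis
    unfolding sign_le_set_eq_Inter[OF assms]
    by (intro closed_INT ballI closed_Int closed_halfspace_ge)
qed

lemma convex_sign_le_set:
  assumes "s \<in> arr_signs m u a"
  shows "convex {x. sign_le (sign_vec m u a x) s}"
proof -
  have "convex {x. s k = 0 \<longrightarrow> inner (u k) x = a k}" for k
    by (cases "s k = 0") (auto intro!: convex_hyperplane)
  then show ?thesis
    unfolding sign_le_set_eq_Inter[OF assms]
    by (intro convex_INT ballI convex_Int convex_halfspace_ge)
qed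

lemma open_segment_subset_cell:
  assumes s: "s \<in> arr_signs m u a" and y: "sign_le (sign_vec m u a y) s" and x: "x \<in> cell m u a s"
  shows "open_segment y x \<subseteq> cell m u a s"
proof
  fix z assume "z \<in> open_segment y x"
  then obtain e where e: "0 < e" "e < 1" "z = (1 - e) *\<^sub>R y + e *\<^sub>R x"
    by (auto simp: in_segment)
  have x': "sign_vec m u a x = s" using x by (simp add: cell_def)
  have "sign_vec m u a z = s"
  proof (rule sign_vec_eqI[OF s])
    fix k assume k: "k < m"
    have z: "inner (u k) z - a k = (1 - e) * (inner (u k) y - a k) + e * (inner (u k) x - a k)"
      unfolding e(3) by (rule inner_combination_diff)
    have y': "(s k = 0 \<longrightarrow> inner (u k) y - a k = 0) \<and> 0 \<le> s k * (inner (u k) y - a k)"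
      using y k sign_le_sign_vec_iff[OF s] by blast
    have "sgn (inner (u k) x - a k) = s k" using x' k by (auto simp: sign_vec_below)
    then show "s k = 0 \<Longrightarrow> inner (u k) z - a k = 0"
      using y' z by (simp add: sgn_zero_iff)
    assume "s k \<noteq> 0"
    with \<open>sgn (inner (u k) x - a k) = s k\<close> have "0 < e * (s k * (inner (u k) x - a k))"
      using sgn_eq_iff_mult_pos[OF arr_signs_nonzero[OF s]] e by simp
    moreover have "0 \<le> (1 - e) * (s k * (inner (u k) y - a k))" using y' e by simp
    ultimately show "0 < s k * (inner (u k) z - a k)"
      unfolding z by (simp add: algebra_simps)
  qed
  then show "z \<in> cell m u a s" by (simp add: cell_def)
qed

lemma closure_cell:
  assumes s: "s \<in> arr_signs m u a"
  shows "closure (cell m u a s) = {x. sign_le (sign_vec m u a x) s}"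
proof
  show "closure (cell m u a s) \<subseteq> {x. sign_le (sign_vec m u a x) s}"
    by (rule closure_minimal) (auto simp: cell_def intro: closed_sign_le_set[OF s])
  obtain x where x: "x \<in> cell m u a s" using s by (auto simp: arr_signs_def cell_def)
  show "{x. sign_le (sign_vec m u a x) s} \<subseteq> closure (cell m u a s)"
  proof
    fix y assume y: "y \<in> {x. sign_le (sign_vec m u a x) s}"
    show "y \<in> closure (cell m u a s)"
    proof (cases "y = x")
      case False
      then have "y \<in> closure (open_segment y x)" by simp
      then show ?thesis
        using closure_mono[OF open_segment_subset_cell[OF s _ x]] y by blast
    qed (use x closure_subset in blast)
  qed
qed

lemma arr_faces_eq_image: "arr_faces m u a = (\<lambda>s. closure (cell m u a s)) ` arr_signs m u a"
  unfolding arr_faces_def cell_def by auto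

lemma closure_cell_subset_iff:
  assumes s: "s \<in> arr_signs m u a" and t: "t \<in> arr_signs m u a"
  shows "closure (cell m u a t) \<subseteq> closure (cell m u a s) \<longleftrightarrow> sign_le t s"
proof
  obtain x where x: "sign_vec m u a x = t" using t by (auto simp: arr_signs_def)
  assume "closure (cell m u a t) \<subseteq> closure (cell m u a s)"
  moreover have "x \<in> closure (cell m u a t)" using x closure_subset by (fastforce simp: cell_def)
  ultimately show "sign_le t s" using x closure_cell[OF s] by auto
qed (auto simp: closure_cell[OF s] closure_cell[OF t] intro: sign_le_trans)

lemma inj_on_closure_cell: "inj_on (\<lambda>s. closure (cell m u a s)) (arr_signs m u a)"
  by (rule inj_onI) (metis closure_cell_subset_iff order_refl sign_le_antisym)

section \<open>Normal cones of closed cells\<close>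

lemma sign_vec_shift:
  "\<exists>e>0. \<forall>k<m. sign_vec m u a (x + e *\<^sub>R d) k =
     (if sign_vec m u a x k = 0 then sgn (inner (u k) d) else sign_vec m u a x k)"
proof -
  let ?t = "sign_vec m u a x" and ?f = "\<lambda>e k. inner (u k) (x + e *\<^sub>R d) - a k"
  have "\<forall>\<^sub>F e in at_right 0. ?t k \<noteq> 0 \<longrightarrow> 0 < ?t k * ?f e k" if "k < m" for k
  proof (cases "?t k = 0")
    case False
    have "((\<lambda>e. ?t k * ?f e k) \<longlongrightarrow> ?t k * ?f 0 k) (at_right 0)"
      by (intro tendsto_intros)
    moreover have "0 < ?t k * ?f 0 k"
      using False that by (auto simp: sign_vec_below sgn_if mult_less_0_iff)
    ultimately show ?thesis by (auto dest: order_tendstoD(1) elim: eventually_mono)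
  qed simp
  then have "\<forall>\<^sub>F e in at_right 0. 0 < e \<and> (\<forall>k\<in>{..<m}. ?t k \<noteq> 0 \<longrightarrow> 0 < ?t k * ?f e k)"
    by (intro eventually_conj eventually_at_right_less eventually_ball_finite) auto
  then obtain e where e: "0 < e" "\<forall>k<m. ?t k \<noteq> 0 \<longrightarrow> 0 < ?t k * ?f e k"
    by (auto dest!: eventually_happens'[OF trivial_limit_at_right_real])
  have "sign_vec m u a (x + e *\<^sub>R d) k = (if ?t k = 0 then sgn (inner (u k) d) else ?t k)"
    if k: "k < m" for k
  proof (cases "?t k = 0")
    case True
    then have "?f e k = e * inner (u k) d"
      using k by (simp add: sign_vec_below sgn_zero_iff inner_add_right)
    then show ?thesis using True k e(1) by (simp add: sign_vec_below sgn_mult)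
  next
    case False
    then show ?thesis
      using e(2) k sgn_eq_iff_mult_pos[OF arr_signs_nonzero[OF sign_vec_in_arr_signs False]]
      by (simp add: sign_vec_below)
  qed
  then show ?thesis using e(1) by blast
qed

definition feasible_dirs :: "nat \<Rightarrow> (nat \<Rightarrow> 'a::euclidean_space) \<Rightarrow> (nat \<Rightarrow> real) \<Rightarrow> (nat \<Rightarrow> real) \<Rightarrow> 'a set" where
  "feasible_dirs m u s t =
     {d. \<forall>k<m. t k = 0 \<longrightarrow> (s k = 0 \<longrightarrow> inner (u k) d = 0) \<and> 0 \<le> s k * inner (u k) d}"

definition normal_cone_sign :: "nat \<Rightarrow> (nat \<Rightarrow> 'a::euclidean_space) \<Rightarrow> (nat \<Rightarrow> real) \<Rightarrow> (nat \<Rightarrow> real) \<Rightarrow> 'a set" where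
  "normal_cone_sign m u s t = {v. \<forall>d\<in>feasible_dirs m u s t. inner v d \<le> 0}"

lemma diff_in_feasible_dirs:
  assumes s: "s \<in> arr_signs m u a"
    and x: "sign_le (sign_vec m u a x) s" and y: "sign_le (sign_vec m u a y) s"
  shows "y - x \<in> feasible_dirs m u s (sign_vec m u a x)"
  using x y unfolding feasible_dirs_def sign_le_sign_vec_iff[OF s]
  by (auto simp: sign_vec_below sgn_zero_iff inner_diff_right)

lemma feasible_dirs_shift:
  assumes s: "s \<in> arr_signs m u a" and x: "sign_le (sign_vec m u a x) s"
    and d: "d \<in> feasible_dirs m u s (sign_vec m u a x)"
  shows "\<exists>e>0. sign_le (sign_vec m u a (x + e *\<^sub>R d)) s"
proof -
  obtain e where e: "e > 0" "\<forall>k<m. sign_vec m u a (x + e *\<^sub>R d) k =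
     (if sign_vec m u a x k = 0 then sgn (inner (u k) d) else sign_vec m u a x k)"
    using sign_vec_shift by blast
  have "sign_vec m u a (x + e *\<^sub>R d) k = 0 \<or> sign_vec m u a (x + e *\<^sub>R d) k = s k" for k
  proof (cases "k < m")
    case True
    then show ?thesis
      using e(2) x d arr_signs_cases[OF s, of k]
      by (auto simp: sign_le_def feasible_dirs_def sgn_if zero_le_mult_iff)
  qed (simp add: sign_vec_beyond)
  then show ?thesis using e(1) unfolding sign_le_def by blast
qed

lemma support_fun_eq_iff:
  assumes "x \<in> P"
  shows "support_fun P v = ereal (inner v x) \<longleftrightarrow> (\<forall>y\<in>P. inner v y \<le> inner v x)"
proof
  assume "support_fun P v = ereal (inner v x)"
  then show "\<forall>y\<in>P. inner v y \<le> inner v x"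
    unfolding support_fun_def by (metis SUP_upper ereal_less_eq(3))
qed (use assms in \<open>auto simp: support_fun_def intro!: antisym SUP_least SUP_upper2\<close>)

lemma normal_cone_at_eq:
  "x \<in> P \<Longrightarrow> normal_cone_at P x = {v. \<forall>y\<in>P. inner v (y - x) \<le> 0}"
  unfolding normal_cone_at_def by (auto simp: support_fun_eq_iff[symmetric] inner_diff_right)

lemma normal_cone_at_closure_cell:
  assumes s: "s \<in> arr_signs m u a" and x: "sign_le (sign_vec m u a x) s"
  shows "normal_cone_at (closure (cell m u a s)) x = normal_cone_sign m u s (sign_vec m u a x)"
proof -
  have xP: "x \<in> closure (cell m u a s)" using x closure_cell[OF s] by blast
  have "normal_cone_at (closure (cell m u a s)) x =
      {v. \<forall>y. sign_le (sign_vec m u a y) s \<longrightarrow> inner v (y - x) \<le> 0}"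
    using normal_cone_at_eq[OF xP] by (simp add: closure_cell[OF s])
  also have "\<dots> = normal_cone_sign m u s (sign_vec m u a x)"
    unfolding normal_cone_sign_def
  proof (intro Collect_cong iffI ballI allI impI)
    fix v d assume v: "\<forall>y. sign_le (sign_vec m u a y) s \<longrightarrow> inner v (y - x) \<le> 0"
      and d: "d \<in> feasible_dirs m u s (sign_vec m u a x)"
    obtain e where "e > 0" "sign_le (sign_vec m u a (x + e *\<^sub>R d)) s"
      using feasible_dirs_shift[OF s x d] by blast
    with v have "e * inner v d \<le> 0" by force
    with \<open>e > 0\<close> show "inner v d \<le> 0" by (simp add: mult_le_0_iff)
  qed (use diff_in_feasible_dirs[OF s x] in blast)
  finally show ?thesis .
qed

lemma sign_le_set_eq_Int_hyperplanes:
  assumes s: "s \<in> arr_signs m u a" and t: "t \<in> arr_signs m u a" and ts: "sign_le t s"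
  shows "{x. sign_le (sign_vec m u a x) t} = {x. sign_le (sign_vec m u a x) s} \<inter>
    (\<Inter>k\<in>{k. k < m \<and> t k = 0}. {x. inner (s k *\<^sub>R u k) x = s k * a k})"
proof -
  have "((t k = 0 \<longrightarrow> inner (u k) x - a k = 0) \<and> 0 \<le> t k * (inner (u k) x - a k)) \<longleftrightarrow>
        ((s k = 0 \<longrightarrow> inner (u k) x - a k = 0) \<and> 0 \<le> s k * (inner (u k) x - a k)) \<and>
        (t k = 0 \<longrightarrow> s k * inner (u k) x = s k * a k)" for k x
    using ts arr_signs_cases[OF s, of k] unfolding sign_le_def by (cases "t k = 0") (auto simp: algebra_simps)
  then show ?thesis unfolding sign_le_sign_vec_iff[OF s] sign_le_sign_vec_iff[OF t] by auto
qed

lemma face_of_closure_cell: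
  assumes s: "s \<in> arr_signs m u a" and t: "t \<in> arr_signs m u a" and ts: "sign_le t s"
  shows "closure (cell m u a t) face_of closure (cell m u a s)"
proof -
  let ?P = "{x. sign_le (sign_vec m u a x) s}"
  let ?H = "\<lambda>k. {x. inner (s k *\<^sub>R u k) x = s k * a k}"
  have supporting: "?P \<inter> ?H k face_of ?P" for k
  proof (rule face_of_Int_supporting_hyperplane_ge[OF convex_sign_le_set[OF s]])
    show "s k * a k \<le> inner (s k *\<^sub>R u k) x" if "x \<in> ?P" for x
      using that sign_le_sign_vec_iff[OF s] arr_signs_beyond[OF s, of k]
      by (cases "k < m") (auto simp: algebra_simps)
  qed
  have face_Inter: "\<Inter> (insert P ((\<lambda>k. P \<inter> H k) ` Z)) face_of P"
    if "convex P" "\<And>k. P \<inter> H k face_of P" for P :: "'a set" and H Z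
    using that by (intro face_of_Inter) (auto intro: face_of_refl)
  have Inter_eq: "\<Inter> (insert P ((\<lambda>k. P \<inter> H k) ` Z)) = P \<inter> \<Inter> (H ` Z)" for P :: "'a set" and H Z
    by auto
  show ?thesis
    unfolding closure_cell[OF s] closure_cell[OF t] sign_le_set_eq_Int_hyperplanes[OF s t ts]
      Inter_eq[symmetric]
    by (rule face_Inter[OF convex_sign_le_set[OF s] supporting])
qed

lemma cell_eq_open_Int:
  assumes t: "t \<in> arr_signs m u a"
  shows "cell m u a t = {x. \<forall>k<m. t k \<noteq> 0 \<longrightarrow> 0 < t k * (inner (u k) x - a k)} \<inter>
    {x. \<forall>k<m. t k = 0 \<longrightarrow> inner (u k) x = a k}"
proof (intro set_eqI iffI)
  fix x assume "x \<in> cell m u a t"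
  then have "\<forall>k<m. t k = sgn (inner (u k) x - a k)" by (auto simp: cell_def sign_vec_below)
  then show "x \<in> {x. \<forall>k<m. t k \<noteq> 0 \<longrightarrow> 0 < t k * (inner (u k) x - a k)} \<inter>
    {x. \<forall>k<m. t k = 0 \<longrightarrow> inner (u k) x = a k}"
    by (auto simp: sgn_zero_iff sgn_times_self_pos)
next
  fix x assume "x \<in> {x. \<forall>k<m. t k \<noteq> 0 \<longrightarrow> 0 < t k * (inner (u k) x - a k)} \<inter>
    {x. \<forall>k<m. t k = 0 \<longrightarrow> inner (u k) x = a k}"
  then have "sign_vec m u a x = t" by (intro sign_vec_eqI[OF t]) auto
  then show "x \<in> cell m u a t" by (simp add: cell_def)
qed

lemma open_strict_sign_set:
  fixes m :: nat and u :: "nat \<Rightarrow> 'a::euclidean_space"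
  shows "open {x. \<forall>k<m. t k \<noteq> 0 \<longrightarrow> 0 < t k * (inner (u k) x - a k)}"
proof -
  have eq: "{x. \<forall>k<m. t k \<noteq> 0 \<longrightarrow> 0 < t k * (inner (u k) x - a k)} =
      (\<Inter>k\<in>{k. k < m \<and> t k \<noteq> 0}. {x. 0 < t k * (inner (u k) x - a k)})"
    by auto
  show ?thesis unfolding eq
    by (intro open_INT ballI open_Collect_less continuous_intros) auto
qed

lemma open_cell_no_zero:
  assumes "t \<in> arr_signs m u a" "\<forall>k<m. t k \<noteq> 0"
  shows "open (cell m u a t)"
  using open_strict_sign_set[of m t u a] assms by (simp add: cell_eq_open_Int[OF assms(1)])

lemma sign_vec_in_rel_interior_closure_cell:
  "sign_vec m u a x = t \<Longrightarrow> x \<in> rel_interior (closure (cell m u a t))"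
  unfolding mem_rel_interior
proof (intro exI conjI)
  assume x: "sign_vec m u a x = t"
  then have t: "t \<in> arr_signs m u a" by auto
  let ?O = "{x. \<forall>k<m. t k \<noteq> 0 \<longrightarrow> 0 < t k * (inner (u k) x - a k)}"
  let ?H = "{x. \<forall>k<m. t k = 0 \<longrightarrow> inner (u k) x = a k}"
  show "open ?O" by (rule open_strict_sign_set)
  have "x \<in> cell m u a t" using x by (simp add: cell_def)
  then show "x \<in> ?O \<inter> closure (cell m u a t)"
    using cell_eq_open_Int[OF t] closure_subset[of "cell m u a t"] by blast
  have "affine ?H" by (auto simp: affine_def inner_add_right simp flip: distrib_right)
  moreover have "closure (cell m u a t) \<subseteq> ?H"
  proof (rule closure_minimal)
    show "cell m u a t \<subseteq> ?H" using cell_eq_open_Int[OF t] by blast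
    show "closed ?H" by (auto intro!: closed_Collect_all closed_Collect_imp closed_Collect_eq continuous_intros)
  qed
  ultimately have "affine hull closure (cell m u a t) \<subseteq> ?H"
    by (intro hull_minimal)
  then show "?O \<inter> affine hull closure (cell m u a t) \<subseteq> closure (cell m u a t)"
    using cell_eq_open_Int[OF t] closure_subset[of "cell m u a t"] by blast
qed

lemma normal_fan_closure_cell:
  assumes s: "s \<in> arr_signs m u a"
  shows "normal_fan (closure (cell m u a s)) =
    {normal_cone_sign m u s t | t. t \<in> arr_signs m u a \<and> sign_le t s}"
proof (intro set_eqI iffI)
  fix C assume "C \<in> normal_fan (closure (cell m u a s))"
  then obtain G x where G: "G face_of closure (cell m u a s)" "x \<in> rel_interior G"
    and C: "C = normal_cone_at (closure (cell m u a s)) x"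
    unfolding normal_fan_def by auto
  have "x \<in> closure (cell m u a s)" using G face_of_imp_subset rel_interior_subset by blast
  then have "sign_le (sign_vec m u a x) s" using closure_cell[OF s] by auto
  then show "C \<in> {normal_cone_sign m u s t | t. t \<in> arr_signs m u a \<and> sign_le t s}"
    using C normal_cone_at_closure_cell[OF s] by auto
next
  fix C assume "C \<in> {normal_cone_sign m u s t | t. t \<in> arr_signs m u a \<and> sign_le t s}"
  then obtain t where t: "t \<in> arr_signs m u a" "sign_le t s" and C: "C = normal_cone_sign m u s t"
    by auto
  obtain x where x: "sign_vec m u a x = t" using t(1) by (auto simp: arr_signs_def)
  then show "C \<in> normal_fan (closure (cell m u a s))"
    unfolding normal_fan_def
    using C normal_cone_at_closure_cell[OF s] t face_of_closure_cell[OF s t]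
      sign_vec_in_rel_interior_closure_cell[OF x] by auto
qed

section \<open>Equal sign sets give normally equivalent arrangements\<close>

lemma arr_normally_equiv_if_arr_signs_eq:
  assumes eq: "arr_signs m u a = arr_signs m u b"
  shows "arr_normally_equiv (arr_faces m u a) (arr_faces m u b)"
proof -
  let ?S = "arr_signs m u a"
  define fa where "fa = (\<lambda>s. closure (cell m u a s))"
  define fb where "fb = (\<lambda>s. closure (cell m u b s))"
  define \<Psi> where "\<Psi> = fb \<circ> inv_into ?S fa"
  have ia: "inj_on fa ?S" unfolding fa_def by (rule inj_on_closure_cell)
  have ib: "inj_on fb ?S" unfolding fb_def eq by (rule inj_on_closure_cell)
  have Fa: "arr_faces m u a = fa ` ?S" unfolding fa_def by (rule arr_faces_eq_image)
  have Fb: "arr_faces m u b = fb ` ?S" unfolding fb_def eq by (rule arr_faces_eq_image)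
  have \<Psi>: "\<Psi> (fa s) = fb s" if "s \<in> ?S" for s
    unfolding \<Psi>_def using inv_into_f_f[OF ia that] by simp
  show ?thesis unfolding arr_normally_equiv_def
  proof (intro exI conjI ballI)
    show "bij_betw \<Psi> (arr_faces m u a) (arr_faces m u b)"
      unfolding \<Psi>_def Fa Fb
      using bij_betw_inv_into[OF inj_on_imp_bij_betw[OF ia]] inj_on_imp_bij_betw[OF ib]
      by (rule bij_betw_trans)
  next
    fix G H assume "G \<in> arr_faces m u a" "H \<in> arr_faces m u a"
    then obtain s t where st: "s \<in> ?S" "t \<in> ?S" "G = fa s" "H = fa t" unfolding Fa by auto
    then show "G \<subseteq> H \<longleftrightarrow> \<Psi> G \<subseteq> \<Psi> H"
      unfolding st(3,4) \<Psi>[OF st(1)] \<Psi>[OF st(2)] unfolding fa_def fb_def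
      using closure_cell_subset_iff[OF st(2) st(1)] closure_cell_subset_iff[of t m u b s] eq by simp
  next
    fix G assume "G \<in> arr_faces m u a"
    then obtain s where s: "s \<in> ?S" "G = fa s" unfolding Fa by auto
    then have "s \<in> arr_signs m u b" using eq by simp
    then show "normally_equiv G (\<Psi> G)"
      unfolding normally_equiv_def s(2) \<Psi>[OF s(1)] unfolding fa_def fb_def
      by (simp add: normal_fan_closure_cell[OF s(1)] normal_fan_closure_cell eq)
  qed
qed

lemma arr_normally_equiv_sym:
  assumes "arr_normally_equiv F F'"
  shows "arr_normally_equiv F' F"
proof -
  obtain \<Psi> where bij: "bij_betw \<Psi> F F'" and ord: "\<forall>G\<in>F. \<forall>H\<in>F. G \<subseteq> H \<longleftrightarrow> \<Psi> G \<subseteq> \<Psi> H"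
    and ne: "\<forall>G\<in>F. normally_equiv G (\<Psi> G)"
    using assms unfolding arr_normally_equiv_def by blast
  define \<Phi> where "\<Phi> = inv_into F \<Psi>"
  have bij': "bij_betw \<Phi> F' F" unfolding \<Phi>_def by (rule bij_betw_inv_into[OF bij])
  have inv: "\<Psi> (\<Phi> G') = G'" if "G' \<in> F'" for G'
    unfolding \<Phi>_def using that bij by (simp add: bij_betw_def f_inv_into_f)
  have inF: "\<Phi> G' \<in> F" if "G' \<in> F'" for G' using bij' that bij_betwE by blast
  show ?thesis unfolding arr_normally_equiv_def
  proof (intro exI conjI ballI)
    fix G' H' assume "G' \<in> F'" "H' \<in> F'"
    then show "G' \<subseteq> H' \<longleftrightarrow> \<Phi> G' \<subseteq> \<Phi> H'" using ord inF inv by metis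
  next
    fix G' assume "G' \<in> F'"
    then show "normally_equiv G' (\<Phi> G')"
      using ne inF inv unfolding normally_equiv_def by metis
  qed (rule bij')
qed

section \<open>Generic points\<close>

lemma exists_avoiding_hyperplanes:
  fixes c :: "'i \<Rightarrow> 'a::euclidean_space"
  assumes "open S" "S \<noteq> {}" "finite I" "\<forall>i\<in>I. c i \<noteq> 0"
  shows "\<exists>x\<in>S. \<forall>i\<in>I. inner (c i) x \<noteq> e i"
proof (rule ccontr)
  assume "\<not> ?thesis"
  then have "S \<subseteq> (\<Union>i\<in>I. {x. c i \<bullet> x = e i})" by auto
  moreover have "negligible (\<Union>i\<in>I. {x. c i \<bullet> x = e i})"
    using assms(3,4) negligible_hyperplane by (intro negligible_Union) auto
  ultimately show False
    using negligible_subset open_not_negligible[OF assms(1,2)] by blast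
qed

lemma exists_region_above:
  fixes u :: "nat \<Rightarrow> 'a::euclidean_space"
  assumes nonzero: "\<forall>i<m. u i \<noteq> 0" and t: "t \<in> arr_signs m u a"
    and k: "k < m" and \<sigma>: "\<sigma> = 1 \<or> \<sigma> = -1"
  shows "\<exists>s\<in>arr_signs m u a. (\<forall>l<m. s l \<noteq> 0) \<and> sign_le t s \<and> (t k = 0 \<longrightarrow> s k = \<sigma>)"
proof -
  obtain x where x: "sign_vec m u a x = t" using t by (auto simp: arr_signs_def)
  obtain d0 :: 'a where d0: "\<forall>l\<in>{..<m}. inner (u l) d0 \<noteq> 0"
    using exists_avoiding_hyperplanes[of UNIV "{..<m}" u "\<lambda>_. 0"] nonzero by auto
  define d where "d = (\<sigma> * sgn (inner (u k) d0)) *\<^sub>R d0"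
  have "\<sigma> * sgn (inner (u k) d0) = 1 \<or> \<sigma> * sgn (inner (u k) d0) = -1"
    using d0 k \<sigma> by (auto simp: sgn_if)
  then have d: "\<forall>l<m. inner (u l) d \<noteq> 0" and dk: "sgn (inner (u k) d) = \<sigma>"
    using d0 k \<sigma> by (auto simp: d_def sgn_mult)
  obtain e where e: "\<forall>l<m. sign_vec m u a (x + e *\<^sub>R d) l =
     (if t l = 0 then sgn (inner (u l) d) else t l)"
    using sign_vec_shift x by blast
  show ?thesis
  proof (intro bexI conjI allI impI)
    show "sign_le t (sign_vec m u a (x + e *\<^sub>R d))"
      unfolding sign_le_def using e x by (metis not_le sign_vec_beyond)
    show "sign_vec m u a (x + e *\<^sub>R d) l \<noteq> 0" if "l < m" for l
      using e d that by (simp add: sgn_zero_iff)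
    show "sign_vec m u a (x + e *\<^sub>R d) k = \<sigma>" if "t k = 0"
      using e dk k that by simp
  qed simp
qed

lemma exists_generic_point_on_hyperplane:
  fixes u :: "nat \<Rightarrow> 'a::euclidean_space"
  assumes nonparallel: "\<forall>i<m. \<forall>j<m. i \<noteq> j \<longrightarrow> (\<nexists>c. u j = c *\<^sub>R u i)"
    and j: "j < m" and uj: "u j \<noteq> 0"
  shows "\<exists>y. inner (u j) y = a j \<and> (\<forall>i<m. i \<noteq> j \<longrightarrow> inner (u i) y \<noteq> a i)"
proof -
  let ?n = "inner (u j) (u j)"
  define p where "p = (a j / ?n) *\<^sub>R u j"
  define c where "c i = u i - (inner (u i) (u j) / ?n) *\<^sub>R u j" for i
  have "\<forall>i\<in>{i. i < m \<and> i \<noteq> j}. c i \<noteq> 0"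
    using nonparallel j by (auto simp: c_def)
  then obtain z where z: "\<forall>i\<in>{i. i < m \<and> i \<noteq> j}. inner (c i) z \<noteq> a i - inner (u i) p"
    using exists_avoiding_hyperplanes[of UNIV "{i. i < m \<and> i \<noteq> j}" c "\<lambda>i. a i - inner (u i) p"]
    by auto
  define y where "y = p + z - (inner z (u j) / ?n) *\<^sub>R u j"
  have "inner (u j) y = a j" unfolding y_def p_def using uj
    by (simp add: inner_add_right inner_diff_right inner_commute)
  moreover have "inner (u i) y = inner (u i) p + inner (c i) z" for i
    unfolding y_def c_def by (simp add: inner_add_right inner_diff_right inner_diff_left inner_commute)
  ultimately show ?thesis using z by (intro exI[of _ y]) auto
qed

section \<open>Normal cones at facets\<close>

lemma eq_scaleR_if_nonpos_on_orthogonal: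
  fixes w v :: "'a::euclidean_space"
  assumes w: "w \<noteq> 0" and v: "\<forall>d. inner w d = 0 \<longrightarrow> inner v d \<le> 0"
  shows "\<exists>c. v = c *\<^sub>R w"
proof -
  define c where "c = inner v w / inner w w"
  define d where "d = v - c *\<^sub>R w"
  have wd: "inner w d = 0"
    unfolding d_def c_def using w by (simp add: inner_diff_right inner_commute)
  then have "inner v d \<le> 0" "inner v (- d) \<le> 0"
    using v[rule_format, of d] v[rule_format, of "- d"] by (auto simp: inner_minus_right)
  then have "inner v d = 0" by (simp add: inner_minus_right)
  moreover have "inner d d = inner v d - c * inner w d"
    unfolding d_def by (simp add: inner_diff_left)
  ultimately have "inner d d = 0" using wd by simp
  then show ?thesis unfolding d_def by auto
qed

lemma normal_cone_sign_no_zero: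
  assumes "\<forall>k<m. t k \<noteq> 0"
  shows "normal_cone_sign m u s t = {0}"
proof -
  have "v = 0" if "v \<in> normal_cone_sign m u s t" for v
  proof -
    have "inner v v \<le> 0" using assms that unfolding normal_cone_sign_def feasible_dirs_def by blast
    then show ?thesis by (metis inner_eq_zero_iff inner_ge_zero order_antisym)
  qed
  then show ?thesis by (auto simp: normal_cone_sign_def)
qed

lemma scaleR_in_normal_cone_sign:
  assumes s: "s \<in> arr_signs m u a" and k: "k < m" "t k = 0" and c: "c * s k \<le> 0"
  shows "c *\<^sub>R u k \<in> normal_cone_sign m u s t"
  unfolding normal_cone_sign_def feasible_dirs_def
proof (intro CollectI ballI)
  fix d assume "d \<in> {d. \<forall>k<m. t k = 0 \<longrightarrow> (s k = 0 \<longrightarrow> inner (u k) d = 0) \<and> 0 \<le> s k * inner (u k) d}"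
  then have "(s k = 0 \<longrightarrow> inner (u k) d = 0) \<and> 0 \<le> s k * inner (u k) d" using k by blast
  then show "inner (c *\<^sub>R u k) d \<le> 0"
    using c arr_signs_cases[OF s, of k] by (auto simp: mult_le_0_iff zero_le_mult_iff)
qed

lemma normal_cone_sign_single_zero:
  assumes s: "s \<in> arr_signs m u a" and k: "k < m" "t k = 0" and uk: "u k \<noteq> 0"
    and others: "\<forall>l<m. l \<noteq> k \<longrightarrow> t l \<noteq> 0"
  shows "normal_cone_sign m u s t = {c *\<^sub>R u k | c. c * s k \<le> 0}"
proof (intro set_eqI iffI)
  fix v assume v: "v \<in> normal_cone_sign m u s t"
  have feasible: "d \<in> feasible_dirs m u s t \<longleftrightarrow> (s k = 0 \<longrightarrow> inner (u k) d = 0) \<and> 0 \<le> s k * inner (u k) d" for d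
    using k others unfolding feasible_dirs_def by auto
  have "\<forall>d. inner (u k) d = 0 \<longrightarrow> inner v d \<le> 0"
    using v feasible unfolding normal_cone_sign_def by simp
  then obtain c where c: "v = c *\<^sub>R u k" using eq_scaleR_if_nonpos_on_orthogonal[OF uk] by blast
  have "s k * s k * inner (u k) (u k) \<ge> 0" by simp
  then have "s k *\<^sub>R u k \<in> feasible_dirs m u s t"
    unfolding feasible by (auto simp: mult.assoc)
  then have "c * s k * inner (u k) (u k) \<le> 0"
    using v unfolding normal_cone_sign_def c by (auto simp: algebra_simps)
  then have "c * s k \<le> 0" using uk by (metis inner_gt_zero_iff linorder_not_le mult_pos_pos)
  then show "v \<in> {c *\<^sub>R u k | c. c * s k \<le> 0}" using c by blast
qed (use scaleR_in_normal_cone_sign[OF s k(1), of t] k(2) in blast)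

lemma scaleR_cones_eq_imp_eq:
  fixes w :: "'a::real_vector"
  assumes w: "w \<noteq> 0" and \<sigma>: "\<sigma> \<in> {-1, 0, 1}" "\<sigma>' \<in> {-1, 0, 1}"
    and eq: "{c *\<^sub>R w | c. c * \<sigma> \<le> 0} = {c *\<^sub>R w | c. c * \<sigma>' \<le> 0}"
  shows "\<sigma> = \<sigma>'"
proof -
  have "c * \<sigma> \<le> 0 \<longleftrightarrow> c * \<sigma>' \<le> 0" for c
  proof -
    have "c *\<^sub>R w \<in> {c *\<^sub>R w | c. c * \<sigma> \<le> 0} \<longleftrightarrow> c * \<sigma> \<le> 0" for \<sigma>
      using w by (auto simp: scaleR_cancel_right)
    then show ?thesis using eq by blast
  qed
  from this[of \<sigma>] this[of \<sigma>'] this[of 1] show ?thesis using \<sigma> by auto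
qed

lemma zero_of_normal_cone_sign_on_line:
  fixes u :: "nat \<Rightarrow> 'a::euclidean_space"
  assumes nonparallel: "\<forall>i<m. \<forall>j<m. i \<noteq> j \<longrightarrow> (\<nexists>c. u j = c *\<^sub>R u i)"
    and s: "s \<in> arr_signs m u a" and line: "normal_cone_sign m u s t \<subseteq> range (\<lambda>c. c *\<^sub>R u j)"
    and j: "j < m" and k: "k < m" "t k = 0"
  shows "k = j"
proof -
  define c0 where "c0 = (if s k = 0 then 1 else - s k)"
  have "c0 \<noteq> 0" "c0 * s k \<le> 0"
    using arr_signs_cases[OF s, of k] by (auto simp: c0_def)
  then obtain c where "c0 *\<^sub>R u k = c *\<^sub>R u j"
    using scaleR_in_normal_cone_sign[OF s k(1), of t] k(2) line by blast
  then have "u k = (c / c0) *\<^sub>R u j"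
    using \<open>c0 \<noteq> 0\<close> by (metis divide_inverse_commute scaleR_scaleR scaleR_one right_inverse mult.commute)
  then show ?thesis using nonparallel j k by blast
qed

section \<open>Normal equivalences fix the regions\<close>

locale arr_face_iso =
  fixes m :: nat and u :: "nat \<Rightarrow> 'a::euclidean_space" and a b :: "nat \<Rightarrow> real"
    and \<Psi> :: "'a set \<Rightarrow> 'a set"
  assumes nonzero: "\<forall>i<m. u i \<noteq> 0"
    and nonparallel: "\<forall>i<m. \<forall>j<m. i \<noteq> j \<longrightarrow> (\<nexists>c. u j = c *\<^sub>R u i)"
    and bij: "bij_betw \<Psi> (arr_faces m u a) (arr_faces m u b)"
    and subset_iff: "\<forall>G\<in>arr_faces m u a. \<forall>H\<in>arr_faces m u a. G \<subseteq> H \<longleftrightarrow> \<Psi> G \<subseteq> \<Psi> H"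
    and normally_equiv_image: "\<forall>G\<in>arr_faces m u a. normally_equiv G (\<Psi> G)"
begin

lemma image_closure_cell:
  assumes "s \<in> arr_signs m u a"
  obtains s' where "s' \<in> arr_signs m u b" "\<Psi> (closure (cell m u a s)) = closure (cell m u b s')"
proof -
  have "closure (cell m u a s) \<in> arr_faces m u a" using assms by (simp add: arr_faces_eq_image)
  then have "\<Psi> (closure (cell m u a s)) \<in> arr_faces m u b" using bij bij_betwE by blast
  then show ?thesis using that by (auto simp: arr_faces_eq_image)
qed

lemma normal_fan_image:
  assumes "s \<in> arr_signs m u a" "\<Psi> (closure (cell m u a s)) = closure (cell m u b s')"
  shows "normal_fan (closure (cell m u a s)) = normal_fan (closure (cell m u b s'))"
  using assms normally_equiv_image unfolding normally_equiv_def by (auto simp: arr_faces_eq_image)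

lemma sign_le_image_iff:
  assumes s: "s \<in> arr_signs m u a" "s' \<in> arr_signs m u b" "\<Psi> (closure (cell m u a s)) = closure (cell m u b s')"
    and t: "t \<in> arr_signs m u a" "t' \<in> arr_signs m u b" "\<Psi> (closure (cell m u a t)) = closure (cell m u b t')"
  shows "sign_le t s \<longleftrightarrow> sign_le t' s'"
  using subset_iff s t closure_cell_subset_iff[OF s(1) t(1)] closure_cell_subset_iff[OF s(2) t(2)]
  by (auto simp: arr_faces_eq_image)

lemma facet_image_zeros:
  assumes g: "g \<in> arr_signs m u a" and i: "i < m" "g i = 0" and others: "\<forall>k<m. k \<noteq> i \<longrightarrow> g k \<noteq> 0"
    and g': "g' \<in> arr_signs m u b" "\<Psi> (closure (cell m u a g)) = closure (cell m u b g')"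
  shows "\<forall>k<m. g' k = 0 \<longleftrightarrow> k = i"
proof -
  have fan: "normal_fan (closure (cell m u a g)) = normal_fan (closure (cell m u b g'))"
    by (rule normal_fan_image[OF g g'(2)])
  have "normal_cone_sign m u g g = {c *\<^sub>R u i | c. c * g i \<le> 0}"
    using nonzero normal_cone_sign_single_zero[OF g i(1), of g] i others by blast
  moreover have "normal_cone_sign m u g g \<in> normal_fan (closure (cell m u b g'))"
    using g by (auto simp: fan[symmetric] normal_fan_closure_cell)
  ultimately obtain t' where t': "sign_le t' g'" and line: "normal_cone_sign m u g' t' \<subseteq> range (\<lambda>c. c *\<^sub>R u i)"
    using g' by (fastforce simp: normal_fan_closure_cell)
  have zeros: "k = i" if "k < m" "g' k = 0" for k
    using zero_of_normal_cone_sign_on_line[OF nonparallel g'(1) line i(1) that(1)] t' that(2)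
    unfolding sign_le_def by metis
  have "g' i = 0"
  proof (rule ccontr)
    assume "g' i \<noteq> 0"
    then have "normal_cone_sign m u g' g' = {0}"
      using zeros by (metis normal_cone_sign_no_zero)
    moreover have "normal_cone_sign m u g' g' \<in> normal_fan (closure (cell m u a g))"
      using g' by (auto simp: fan normal_fan_closure_cell)
    ultimately obtain t where "sign_le t g" "normal_cone_sign m u g t = {0}"
      using g by (auto simp: normal_fan_closure_cell)
    moreover have "t i = 0" using \<open>sign_le t g\<close> i unfolding sign_le_def by metis
    ultimately have "1 *\<^sub>R u i = 0" using scaleR_in_normal_cone_sign[OF g i(1), of t 1] i by auto
    then show False using nonzero i by simp
  qed
  then show ?thesis using zeros by blast
qed

lemma region_image_sign_at_facet:
  assumes s: "s \<in> arr_signs m u a" "\<forall>k<m. s k \<noteq> 0"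
    and t: "t \<in> arr_signs m u a" "sign_le t s"
    and j: "j < m" "t j = 0" and others: "\<forall>k<m. k \<noteq> j \<longrightarrow> t k \<noteq> 0"
    and s': "s' \<in> arr_signs m u b" "\<Psi> (closure (cell m u a s)) = closure (cell m u b s')"
  shows "s' j = s j"
proof -
  let ?R = "\<lambda>\<sigma>. {c *\<^sub>R u j | c. c * \<sigma> \<le> 0}"
  have uj: "u j \<noteq> 0" using nonzero j by simp
  have "normal_cone_sign m u s t = ?R (s j)"
    using normal_cone_sign_single_zero[OF s(1) j(1), of t] j(2) uj others by blast
  moreover have "normal_cone_sign m u s t \<in> normal_fan (closure (cell m u b s'))"
    using t by (auto simp: normal_fan_image[OF s(1) s'(2), symmetric] normal_fan_closure_cell[OF s(1)])
  ultimately obtain t' where t': "sign_le t' s'" and cone: "normal_cone_sign m u s' t' = ?R (s j)"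
    using s' by (fastforce simp: normal_fan_closure_cell)
  have zeros: "k = j" if "k < m" "t' k = 0" for k
    using zero_of_normal_cone_sign_on_line[OF nonparallel s'(1) _ j(1) that(1)] that(2) cone by blast
  have "(- s j) *\<^sub>R u j \<in> ?R (s j)" by (intro CollectI exI[of _ "- s j"]) simp
  moreover have "(- s j) *\<^sub>R u j \<noteq> 0" using s(2) j(1) uj by simp
  ultimately have "normal_cone_sign m u s' t' \<noteq> {0}" unfolding cone by blast
  have "t' j = 0"
  proof (rule ccontr)
    assume "t' j \<noteq> 0"
    then have "\<forall>k<m. t' k \<noteq> 0" using zeros by blast
    then show False using \<open>normal_cone_sign m u s' t' \<noteq> {0}\<close> normal_cone_sign_no_zero by blast
  qed
  then have "?R (s' j) = ?R (s j)"
    using normal_cone_sign_single_zero[OF s'(1) j(1), of t'] uj zeros cone by blast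
  moreover have "s' j \<in> {-1, 0, 1}" "s j \<in> {-1, 0, 1}"
    using arr_signs_cases[OF s(1), of j] arr_signs_cases[OF s'(1), of j] by auto
  ultimately show "s' j = s j" using scaleR_cones_eq_imp_eq[OF uj] by blast
qed

lemma region_images_agree_across_facet:
  assumes s: "s \<in> arr_signs m u a" "s' \<in> arr_signs m u b" "\<Psi> (closure (cell m u a s)) = closure (cell m u b s')"
    and s1: "s1 \<in> arr_signs m u a" "s1' \<in> arr_signs m u b" "\<Psi> (closure (cell m u a s1)) = closure (cell m u b s1')"
    and g: "g \<in> arr_signs m u a" "sign_le g s" "sign_le g s1"
    and i: "i < m" "g i = 0" and others: "\<forall>k<m. k \<noteq> i \<longrightarrow> g k \<noteq> 0"
    and j: "j < m" "j \<noteq> i"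
  shows "s' j = s1' j"
proof -
  obtain g' where g': "g' \<in> arr_signs m u b" "\<Psi> (closure (cell m u a g)) = closure (cell m u b g')"
    using image_closure_cell[OF g(1)] by blast
  have "g' j \<noteq> 0" using facet_image_zeros[OF g(1) i others g'] j by blast
  moreover have "sign_le g' s'" "sign_le g' s1'"
    using sign_le_image_iff[OF s g(1) g'] sign_le_image_iff[OF s1 g(1) g'] g by auto
  ultimately show ?thesis unfolding sign_le_def by metis
qed

end

locale arr_face_iso_walk = arr_face_iso +
  fixes j :: nat and y :: "'a::euclidean_space"
  assumes j: "j < m" and y_on: "inner (u j) y = a j" and y_off: "\<forall>i<m. i \<noteq> j \<longrightarrow> inner (u i) y \<noteq> a i"
begin

definition val :: "'a \<Rightarrow> nat \<Rightarrow> real" where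
  "val x k = inner (u k) x - a k"

definition seg :: "'a \<Rightarrow> real \<Rightarrow> 'a" where
  "seg x l = (1 - l) *\<^sub>R x + l *\<^sub>R y"

definition region :: "'a \<Rightarrow> bool" where
  "region x \<longleftrightarrow> (\<forall>k<m. val x k \<noteq> 0)"

definition separating :: "'a \<Rightarrow> nat set" where
  "separating x = {i. i < m \<and> i \<noteq> j \<and> sgn (val x i) \<noteq> sgn (val y i)}"

definition crossing :: "'a \<Rightarrow> nat \<Rightarrow> real" where
  "crossing x k = val x k / (val x k - val y k)"

text \<open>\<open>pair_normal i k\<close> takes the same value at \<open>y\<close> and on the intersection of the
  hyperplanes \<open>i\<close> and \<open>k\<close>, so for \<open>generic x\<close> the segment from \<open>x\<close> to \<open>y\<close> never
  crosses two hyperplanes at once.\<close>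

definition pair_normal :: "nat \<Rightarrow> nat \<Rightarrow> 'a" where
  "pair_normal i k = val y k *\<^sub>R u i - val y i *\<^sub>R u k"

definition generic :: "'a \<Rightarrow> bool" where
  "generic x \<longleftrightarrow> (\<forall>i<m. \<forall>k<m. i \<noteq> j \<longrightarrow> k \<noteq> j \<longrightarrow> i \<noteq> k \<longrightarrow>
     inner (pair_normal i k) x \<noteq> inner (pair_normal i k) y)"

definition keeps_sign :: "(nat \<Rightarrow> real) \<Rightarrow> bool" where
  "keeps_sign s \<longleftrightarrow> (\<forall>s'. s' \<in> arr_signs m u b \<longrightarrow>
     \<Psi> (closure (cell m u a s)) = closure (cell m u b s') \<longrightarrow> s' j = s j)"

lemma sign_vec_eq_sgn_val: "k < m \<Longrightarrow> sign_vec m u a x k = sgn (val x k)"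
  by (simp add: sign_vec_below val_def)

lemma val_seg: "val (seg x l) k = (1 - l) * val x k + l * val y k"
  unfolding val_def seg_def by (rule inner_combination_diff)

lemma val_y_j: "val y j = 0"
  using y_on by (simp add: val_def)

lemma val_y_nonzero: "k < m \<Longrightarrow> k \<noteq> j \<Longrightarrow> val y k \<noteq> 0"
  using y_off by (simp add: val_def)

lemma pair_normal_nonzero:
  assumes "i < m" "k < m" "i \<noteq> j" "k \<noteq> j" "i \<noteq> k"
  shows "pair_normal i k \<noteq> 0"
proof
  assume "pair_normal i k = 0"
  then have "u k = (val y k / val y i) *\<^sub>R u i"
    using val_y_nonzero assms unfolding pair_normal_def by (simp add: eq_vector_fraction_iff)
  then show False using nonparallel assms by blast
qed

lemma separating_val_mult_neg:
  assumes "region x" "k \<in> separating x"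
  shows "val x k * val y k < 0"
proof -
  have "val x k \<noteq> 0" "val y k \<noteq> 0" "sgn (val x k) \<noteq> sgn (val y k)"
    using assms val_y_nonzero unfolding region_def separating_def by auto
  then show ?thesis by (auto simp: sgn_if mult_less_0_iff split: if_splits)
qed

lemma crossing_bounds:
  assumes "region x" "k \<in> separating x"
  shows "0 < crossing x k" "crossing x k < 1"
proof -
  have "val x k * val y k < 0" using separating_val_mult_neg[OF assms] .
  then show "0 < crossing x k" "crossing x k < 1"
    unfolding crossing_def by (auto simp: mult_less_0_iff divide_pos_pos divide_neg_neg field_simps)
qed

lemma sgn_val_seg:
  assumes x: "region x" and k: "k < m" and l: "0 \<le> l" "l < 1"
  shows "sgn (val (seg x l) k) =
    (if k \<in> separating x then sgn (val x k) * sgn (crossing x k - l) else sgn (val x k))"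
proof (cases "k \<in> separating x")
  case True
  then have "val x k * val y k < 0" using separating_val_mult_neg[OF x] by blast
  then have "val x k - val y k \<noteq> 0" "sgn (val x k - val y k) = sgn (val x k)"
    by (auto simp: mult_less_0_iff sgn_if)
  moreover have "val (seg x l) k = (val x k - val y k) * (crossing x k - l)"
    using \<open>val x k - val y k \<noteq> 0\<close> unfolding val_seg crossing_def by (simp add: field_simps)
  ultimately show ?thesis using True by (simp add: sgn_mult)
next
  case False
  show ?thesis
  proof (cases "k = j")
    case True
    then show ?thesis using False l by (simp add: val_seg val_y_j sgn_mult)
  next
    case False
    with \<open>k \<notin> separating x\<close> k have same: "sgn (val y k) = sgn (val x k)"
      unfolding separating_def by auto
    have "val x k \<noteq> 0" using x k by (simp add: region_def)
    then have "0 < sgn (val x k) * val x k" "0 < sgn (val x k) * val y k"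
      using same by (auto simp: sgn_if split: if_splits)
    then have "0 < (1 - l) * (sgn (val x k) * val x k) + l * (sgn (val x k) * val y k)"
      using l by (intro add_pos_nonneg) auto
    then have "0 < sgn (val x k) * val (seg x l) k"
      unfolding val_seg by (simp add: algebra_simps)
    then show ?thesis
      using \<open>k \<notin> separating x\<close> sgn_eq_iff_mult_pos \<open>val x k \<noteq> 0\<close>
      by (auto simp: sgn_if split: if_splits)
  qed
qed

lemma generic_seg:
  assumes "generic x" "l < 1"
  shows "generic (seg x l)"
  unfolding generic_def
proof (intro allI impI)
  fix i k assume "i < m" "k < m" "i \<noteq> j" "k \<noteq> j" "i \<noteq> k"
  then have "inner (pair_normal i k) x - inner (pair_normal i k) y \<noteq> 0"
    using assms(1) unfolding generic_def by auto
  moreover have "inner w (seg x l) - inner w y = (1 - l) * (inner w x - inner w y)" for w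
    using inner_combination_diff[of w "l" x y "inner w y"] by (simp add: seg_def)
  ultimately have "inner (pair_normal i k) (seg x l) - inner (pair_normal i k) y \<noteq> 0"
    using assms(2) by simp
  then show "inner (pair_normal i k) (seg x l) \<noteq> inner (pair_normal i k) y" by simp
qed

lemma val_seg_crossing:
  assumes "region x" "k \<in> separating x"
  shows "val (seg x (crossing x k)) k = 0"
  using sgn_val_seg[OF assms(1), of k "crossing x k"] crossing_bounds[OF assms] assms(2)
  by (simp add: separating_def sgn_zero_iff)

lemma pair_normal_on_intersection:
  assumes "val z i = 0" "val z k = 0"
  shows "inner (pair_normal i k) z = inner (pair_normal i k) y"
  using assms unfolding pair_normal_def val_def by (simp add: inner_diff_left algebra_simps)

lemma crossings_distinct:
  assumes x: "region x" "generic x" and ik: "i \<in> separating x" "k \<in> separating x" "i \<noteq> k"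
  shows "crossing x i \<noteq> crossing x k"
proof
  assume eq: "crossing x i = crossing x k"
  let ?z = "seg x (crossing x i)"
  have "val ?z i = 0" "val ?z k = 0"
    using val_seg_crossing[OF x(1) ik(1)] val_seg_crossing[OF x(1) ik(2)] eq by simp_all
  then have "inner (pair_normal i k) ?z = inner (pair_normal i k) y"
    by (rule pair_normal_on_intersection)
  moreover have "generic ?z" using generic_seg[OF x(2)] crossing_bounds[OF x(1) ik(1)] by simp
  ultimately show False using ik unfolding generic_def separating_def by blast
qed

lemma first_crossing:
  assumes x: "region x" "generic x" and ne: "separating x \<noteq> {}"
  obtains i0 l1 where "i0 \<in> separating x" "crossing x i0 < l1" "l1 < 1"
    "\<And>i. i \<in> separating x \<Longrightarrow> i \<noteq> i0 \<Longrightarrow> l1 < crossing x i"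
proof -
  have fin: "finite (separating x)" by (simp add: separating_def)
  have "Min (crossing x ` separating x) \<in> crossing x ` separating x"
    using fin ne by (intro Min_in) auto
  then obtain i0 where i0: "i0 \<in> separating x" "crossing x i0 = Min (crossing x ` separating x)"
    by auto
  have lt: "crossing x i0 < crossing x i" if "i \<in> separating x" "i \<noteq> i0" for i
    using that i0 fin crossings_distinct[OF x that(1) i0(1)] by (simp add: order_less_le)
  define l2 where "l2 = Min (insert 1 (crossing x ` (separating x - {i0})))"
  have l2: "l2 \<le> 1" "\<And>i. i \<in> separating x \<Longrightarrow> i \<noteq> i0 \<Longrightarrow> l2 \<le> crossing x i"
    using fin unfolding l2_def by auto
  have "l2 \<in> insert 1 (crossing x ` (separating x - {i0}))"
    using fin unfolding l2_def by (intro Min_in) auto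
  then have "crossing x i0 < l2" using lt crossing_bounds[OF x(1) i0(1)] by auto
  then show ?thesis
    using that[OF i0(1), of "(crossing x i0 + l2) / 2"] l2 by fastforce
qed

lemma signs_around_first_crossing:
  assumes x: "region x" and i0: "i0 \<in> separating x" and l1: "crossing x i0 < l1" "l1 < 1"
    and later: "\<And>i. i \<in> separating x \<Longrightarrow> i \<noteq> i0 \<Longrightarrow> l1 < crossing x i"
    and k: "k < m"
  shows "sgn (val (seg x (crossing x i0)) k) = (if k = i0 then 0 else sgn (val x k))"
    and "sgn (val (seg x l1) k) = (if k = i0 then - sgn (val x k) else sgn (val x k))"
proof -
  have l0: "0 < crossing x i0" "crossing x i0 < 1" using crossing_bounds[OF x i0] by auto
  have "k \<noteq> i0 \<Longrightarrow> k \<in> separating x \<Longrightarrow> crossing x i0 < crossing x k"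
    using later l1 by force
  then show "sgn (val (seg x (crossing x i0)) k) = (if k = i0 then 0 else sgn (val x k))"
    using sgn_val_seg[OF x k, of "crossing x i0"] l0 i0 by auto
  show "sgn (val (seg x l1) k) = (if k = i0 then - sgn (val x k) else sgn (val x k))"
    using sgn_val_seg[OF x k, of l1] l0 l1 later i0 by auto
qed

lemma keeps_sign_across_wall:
  assumes s: "s \<in> arr_signs m u a" "\<forall>k<m. s k \<noteq> 0"
    and g: "g \<in> arr_signs m u a" "\<And>k. g k = (if k = i then 0 else s k)"
    and s1: "s1 \<in> arr_signs m u a" "\<And>k. s1 k = (if k = i then - s k else s k)"
    and i: "i < m" "i \<noteq> j" and keeps: "keeps_sign s1"
  shows "keeps_sign s"
  unfolding keeps_sign_def
proof (intro allI impI)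
  fix s' assume s': "s' \<in> arr_signs m u b" "\<Psi> (closure (cell m u a s)) = closure (cell m u b s')"
  obtain s1' where s1': "s1' \<in> arr_signs m u b" "\<Psi> (closure (cell m u a s1)) = closure (cell m u b s1')"
    using image_closure_cell[OF s1(1)] by blast
  have "sign_le g s" "sign_le g s1" using g(2) s1(2) by (auto simp: sign_le_def)
  moreover have "\<forall>k<m. k \<noteq> i \<longrightarrow> g k \<noteq> 0" using g(2) s(2) by simp
  ultimately have "s' j = s1' j"
    using region_images_agree_across_facet[OF s(1) s' s1(1) s1' g(1)] i j g(2) by simp
  also have "\<dots> = s j" using keeps s1' s1(2)[of j] i unfolding keeps_sign_def by auto
  finally show "s' j = s j" .
qed

lemma region_iff_sign_vec: "region x \<longleftrightarrow> (\<forall>k<m. sign_vec m u a x k \<noteq> 0)"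
  by (simp add: region_def sign_vec_eq_sgn_val sgn_zero_iff)

lemma walk_step:
  assumes x: "region x" "generic x" and ne: "separating x \<noteq> {}"
  obtains x1 where "region x1" "generic x1" "card (separating x1) < card (separating x)"
    "keeps_sign (sign_vec m u a x1) \<Longrightarrow> keeps_sign (sign_vec m u a x)"
proof -
  obtain i0 l1 where i0: "i0 \<in> separating x" and l1: "crossing x i0 < l1" "l1 < 1"
    and later: "\<And>i. i \<in> separating x \<Longrightarrow> i \<noteq> i0 \<Longrightarrow> l1 < crossing x i"
    using first_crossing[OF x ne] by blast
  define z where "z = seg x (crossing x i0)"
  define x1 where "x1 = seg x l1"
  note sgn_z = signs_around_first_crossing(1)[OF x(1) i0 l1 later, folded z_def]
  note sgn_x1 = signs_around_first_crossing(2)[OF x(1) i0 l1 later, folded x1_def]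
  have i0m: "i0 < m" "i0 \<noteq> j" using i0 by (auto simp: separating_def)
  have x_nonzero: "\<forall>k<m. sign_vec m u a x k \<noteq> 0" using x(1) by (simp add: region_iff_sign_vec)
  have g: "sign_vec m u a z k = (if k = i0 then 0 else sign_vec m u a x k)" for k
    using sgn_z[of k] i0m by (cases "k < m") (simp_all add: sign_vec_eq_sgn_val sign_vec_beyond)
  have s1: "sign_vec m u a x1 k = (if k = i0 then - sign_vec m u a x k else sign_vec m u a x k)" for k
    using sgn_x1[of k] i0m by (cases "k < m") (simp_all add: sign_vec_eq_sgn_val sign_vec_beyond)
  have "region x1" using s1 x_nonzero by (simp add: region_iff_sign_vec)
  moreover have "generic x1"
    unfolding x1_def using generic_seg[OF x(2) l1(2)] .
  moreover have "card (separating x1) < card (separating x)"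
  proof -
    have "sgn (val y i0) = - sgn (val x i0)"
      using separating_val_mult_neg[OF x(1) i0] by (auto simp: sgn_if mult_less_0_iff)
    then have "separating x1 = separating x - {i0}"
      using sgn_x1 i0 unfolding separating_def by (auto split: if_splits)
    moreover have "finite (separating x)" by (simp add: separating_def)
    ultimately show ?thesis using card_Diff1_less[OF _ i0] by simp
  qed
  moreover have "keeps_sign (sign_vec m u a x1) \<Longrightarrow> keeps_sign (sign_vec m u a x)"
    using keeps_sign_across_wall[OF sign_vec_in_arr_signs x_nonzero sign_vec_in_arr_signs g
        sign_vec_in_arr_signs s1 i0m] .
  ultimately show ?thesis using that by blast
qed

lemma walk_base:
  assumes x: "region x" and "separating x = {}"
  shows "keeps_sign (sign_vec m u a x)"
  unfolding keeps_sign_def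
proof (intro allI impI)
  let ?s = "sign_vec m u a x" and ?t = "sign_vec m u a y"
  fix s' assume "s' \<in> arr_signs m u b" "\<Psi> (closure (cell m u a ?s)) = closure (cell m u b s')"
  moreover have "?t j = 0" "\<forall>k<m. k \<noteq> j \<longrightarrow> ?t k \<noteq> 0"
    using j val_y_j val_y_nonzero by (auto simp: sign_vec_eq_sgn_val sgn_zero_iff)
  moreover have "sign_le ?t ?s"
    unfolding sign_le_def
  proof
    fix k show "?t k = 0 \<or> ?t k = ?s k"
    proof (cases "k < m \<and> k \<noteq> j")
      case True
      then have "sgn (val x k) = sgn (val y k)"
        using \<open>separating x = {}\<close> unfolding separating_def by blast
      then show ?thesis using True by (simp add: sign_vec_eq_sgn_val)
    qed (use \<open>?t j = 0\<close> in \<open>auto simp: sign_vec_beyond\<close>)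
  qed
  moreover have "\<forall>k<m. ?s k \<noteq> 0" using x by (simp add: region_iff_sign_vec)
  ultimately show "s' j = ?s j"
    using region_image_sign_at_facet[OF sign_vec_in_arr_signs _ sign_vec_in_arr_signs _ j] by blast
qed

lemma keeps_sign_region:
  "region x \<Longrightarrow> generic x \<Longrightarrow> keeps_sign (sign_vec m u a x)"
proof (induction "card (separating x)" arbitrary: x rule: less_induct)
  case less
  show ?case
  proof (cases "separating x = {}")
    case False
    then obtain x1 where "region x1" "generic x1" "card (separating x1) < card (separating x)"
      "keeps_sign (sign_vec m u a x1) \<Longrightarrow> keeps_sign (sign_vec m u a x)"
      using walk_step less.prems by blast
    then show ?thesis using less.hyps by blast
  qed (use walk_base less.prems in blast)
qed

end

lemma (in arr_face_iso) region_image: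
  assumes s: "s \<in> arr_signs m u a" "\<forall>k<m. s k \<noteq> 0"
    and s': "s' \<in> arr_signs m u b" "\<Psi> (closure (cell m u a s)) = closure (cell m u b s')"
  shows "s' = s"
proof
  fix j show "s' j = s j"
  proof (cases "j < m")
    case False
    then show ?thesis using arr_signs_beyond[OF s(1)] arr_signs_beyond[OF s'(1)] by simp
  next
    case True
    obtain y where y: "inner (u j) y = a j" "\<forall>i<m. i \<noteq> j \<longrightarrow> inner (u i) y \<noteq> a i"
      using exists_generic_point_on_hyperplane[OF nonparallel True] nonzero True by blast
    interpret W: arr_face_iso_walk m u a b \<Psi> j y
      using True y by (intro arr_face_iso_walk.intro arr_face_iso_axioms arr_face_iso_walk_axioms.intro) auto
    let ?I = "{(i, k). i < m \<and> k < m \<and> i \<noteq> j \<and> k \<noteq> j \<and> i \<noteq> k}"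
    let ?c = "\<lambda>ik. W.pair_normal (fst ik) (snd ik)"
    have "finite ?I" by (rule finite_subset[of _ "{..<m} \<times> {..<m}"]) auto
    moreover have "\<forall>ik\<in>?I. ?c ik \<noteq> 0" using W.pair_normal_nonzero by auto
    moreover have "cell m u a s \<noteq> {}" using s(1) by (auto simp: arr_signs_def cell_def)
    ultimately obtain x where x: "x \<in> cell m u a s" and avoid: "\<forall>ik\<in>?I. inner (?c ik) x \<noteq> inner (?c ik) y"
      using exists_avoiding_hyperplanes[OF open_cell_no_zero[OF s], of ?I ?c "\<lambda>ik. inner (?c ik) y"]
      by blast
    have sx: "sign_vec m u a x = s" using x by (simp add: cell_def)
    have "W.generic x" using avoid unfolding W.generic_def by auto
    moreover have "W.region x" using s(2) sx by (simp add: W.region_iff_sign_vec)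
    ultimately have "W.keeps_sign s" using W.keeps_sign_region sx by blast
    then show ?thesis using s' unfolding W.keeps_sign_def by blast
  qed
qed

lemma (in arr_face_iso) region_fixed:
  assumes s: "s \<in> arr_signs m u a" "\<forall>k<m. s k \<noteq> 0"
  shows "s \<in> arr_signs m u b" "\<Psi> (closure (cell m u a s)) = closure (cell m u b s)"
proof -
  obtain s' where "s' \<in> arr_signs m u b" "\<Psi> (closure (cell m u a s)) = closure (cell m u b s')"
    using image_closure_cell s(1) by blast
  moreover from this have "s' = s" using region_image s by blast
  ultimately show "s \<in> arr_signs m u b" "\<Psi> (closure (cell m u a s)) = closure (cell m u b s)"
    by simp_all
qed

section \<open>Normal equivalences preserve sign vectors\<close>

lemma sign_eq_if_same_upper_regions:
  fixes t t' :: "nat \<Rightarrow> real"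
  assumes t: "t \<in> arr_signs m u a" and t': "t' \<in> arr_signs m u b"
    and t_above: "\<And>k \<sigma>. k < m \<Longrightarrow> \<sigma> = 1 \<or> \<sigma> = -1 \<Longrightarrow> \<exists>s\<in>R. sign_le t s \<and> (t k = 0 \<longrightarrow> s k = \<sigma>)"
    and t'_above: "\<And>k \<sigma>. k < m \<Longrightarrow> \<sigma> = 1 \<or> \<sigma> = -1 \<Longrightarrow> \<exists>s\<in>R. sign_le t' s \<and> (t' k = 0 \<longrightarrow> s k = \<sigma>)"
    and same: "\<forall>s\<in>R. sign_le t s \<longleftrightarrow> sign_le t' s"
    and k: "k < m" "t k \<noteq> 0"
  shows "t' k = t k"
proof -
  obtain s where "s \<in> R" "sign_le t s" using t_above[OF k(1), of 1] by blast
  moreover from this have "sign_le t' s" using same by blast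
  ultimately have "t' k = 0 \<or> t' k = t k" using k(2) unfolding sign_le_def by (metis (full_types))
  moreover have "t' k \<noteq> 0"
  proof
    assume "t' k = 0"
    moreover have "- t k = 1 \<or> - t k = -1" using arr_signs_nonzero[OF t k(2)] by auto
    ultimately obtain r where "r \<in> R" "sign_le t' r" "r k = - t k" using t'_above[OF k(1)] by blast
    then have "t k = 0 \<or> t k = - t k" using same unfolding sign_le_def by (metis (full_types))
    then show False using k(2) by simp
  qed
  ultimately show ?thesis by simp
qed

lemma eq_if_same_upper_regions:
  fixes t t' :: "nat \<Rightarrow> real"
  assumes t: "t \<in> arr_signs m u a" and t': "t' \<in> arr_signs m u b"
    and t_above: "\<And>k \<sigma>. k < m \<Longrightarrow> \<sigma> = 1 \<or> \<sigma> = -1 \<Longrightarrow> \<exists>s\<in>R. sign_le t s \<and> (t k = 0 \<longrightarrow> s k = \<sigma>)"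
    and t'_above: "\<And>k \<sigma>. k < m \<Longrightarrow> \<sigma> = 1 \<or> \<sigma> = -1 \<Longrightarrow> \<exists>s\<in>R. sign_le t' s \<and> (t' k = 0 \<longrightarrow> s k = \<sigma>)"
    and same: "\<forall>s\<in>R. sign_le t s \<longleftrightarrow> sign_le t' s"
  shows "t' = t"
proof
  fix k
  have same': "\<forall>s\<in>R. sign_le t' s \<longleftrightarrow> sign_le t s" using same by blast
  show "t' k = t k"
  proof (cases "k < m")
    case True
    then show ?thesis
      using sign_eq_if_same_upper_regions[OF t t' t_above t'_above same True]
        sign_eq_if_same_upper_regions[OF t' t t'_above t_above same' True]
      by (cases "t k = 0") auto
  qed (simp add: arr_signs_beyond[OF t] arr_signs_beyond[OF t'])
qed

lemma arr_signs_subset_if_normally_equiv: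
  fixes u :: "nat \<Rightarrow> 'a::euclidean_space"
  assumes nonzero: "\<forall>i<m. u i \<noteq> 0"
    and nonparallel: "\<forall>i<m. \<forall>j<m. i \<noteq> j \<longrightarrow> (\<nexists>c. u j = c *\<^sub>R u i)"
    and equiv: "arr_normally_equiv (arr_faces m u a) (arr_faces m u b)"
  shows "arr_signs m u a \<subseteq> arr_signs m u b"
proof
  obtain \<Psi> where "arr_face_iso m u a b \<Psi>"
    using equiv nonzero nonparallel unfolding arr_normally_equiv_def arr_face_iso_def by blast
  then interpret \<Psi>: arr_face_iso m u a b \<Psi> .
  obtain \<Phi> where "arr_face_iso m u b a \<Phi>"
    using arr_normally_equiv_sym[OF equiv] nonzero nonparallel
    unfolding arr_normally_equiv_def arr_face_iso_def by blast
  then interpret \<Phi>: arr_face_iso m u b a \<Phi> .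
  let ?R = "{s \<in> arr_signs m u a. \<forall>k<m. s k \<noteq> 0}"
  fix t assume t: "t \<in> arr_signs m u a"
  obtain t' where t': "t' \<in> arr_signs m u b" "\<Psi> (closure (cell m u a t)) = closure (cell m u b t')"
    using \<Psi>.image_closure_cell[OF t] by blast
  have "t' = t"
  proof (rule eq_if_same_upper_regions[OF t t'(1)])
    show "\<exists>s\<in>?R. sign_le t s \<and> (t k = 0 \<longrightarrow> s k = \<sigma>)" if "k < m" "\<sigma> = 1 \<or> \<sigma> = -1" for k \<sigma>
      using exists_region_above[OF nonzero t that] by blast
    show "\<exists>s\<in>?R. sign_le t' s \<and> (t' k = 0 \<longrightarrow> s k = \<sigma>)" if "k < m" "\<sigma> = 1 \<or> \<sigma> = -1" for k \<sigma>
      using exists_region_above[OF nonzero t'(1) that] \<Phi>.region_fixed(1) by blast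
    show "\<forall>s\<in>?R. sign_le t s \<longleftrightarrow> sign_le t' s"
      using \<Psi>.sign_le_image_iff[OF _ _ _ t t'] \<Psi>.region_fixed by blast
  qed
  then show "t \<in> arr_signs m u b" using t'(1) by simp
qed

theorem mainTheorem18:
  fixes u :: "nat \<Rightarrow> 'a::euclidean_space" and m :: nat and a b :: "nat \<Rightarrow> real"
  assumes nonzero: "\<forall>i<m. u i \<noteq> 0"
    and nonparallel: "\<forall>i<m. \<forall>j<m. i \<noteq> j \<longrightarrow> (\<nexists>c. u j = c *\<^sub>R u i)"
  shows "arr_normally_equiv (arr_faces m u a) (arr_faces m u b)
         \<longleftrightarrow> arr_signs m u a = arr_signs m u b"
proof
  assume equiv: "arr_normally_equiv (arr_faces m u a) (arr_faces m u b)"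
  show "arr_signs m u a = arr_signs m u b"
    using arr_signs_subset_if_normally_equiv[OF nonzero nonparallel equiv]
      arr_signs_subset_if_normally_equiv[OF nonzero nonparallel arr_normally_equiv_sym[OF equiv]]
    by blast
qed (rule arr_normally_equiv_if_arr_signs_eq)

end
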